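(* Let $L$ be a finite distributive lattice and let $K$ be a cutting of $L$. For every $k\ge0$, $$q_k(L\boxplus K)=q_k(L)+q_k(K)+q_{k-1}(K).$$ In particular, $|L\boxplus K|=|L|+|K|$.
   Context: For a finite poset $P$, $\mathcal{F}(P)$ is the set of filters (up-sets) of $P$ ordered by reverse inclusion; every finite distributive lattice is isomorphic to some $\mathcal{F}(P)$. A cutting of a finite distributive lattice $L$ is an interval $K=[\hat0_K,\hat1_K]$ of $L$ such that every maximal chain of $L$ meets $K$. For a cutting $K$ of $L=\mathcal{F}(P)$, let $S=\hat0_K\setminus\hat1_K$, $S_0$ the set of maximal elements of $P\setminus\hat0_K$, $S_1$ the set of minimal elements of $\hat1_K$. The poset $P_K$ is $P\cup\{x_K\}$ ($x_K$ new) where the order on $P$ is unchanged, $z<x_K$ iff $z\le s$ for some $s\in S_0$, $x_K<y$ iff $y\ge s$ for some $s\in S_1$, and $x_K$ is incomparable to every element of $S$. The convex expansion is $L\boxplus K:=\mathcal{F}(P_K)$. For a finite lattice $M$ and $k\ge0$, $q_k(M)$ is the number of convex sublattices (intervals) of $M$ isomorphic to the Boolean lattice $\mathbf{B}_k$ with $2^k$ elements (so $q_0(M)=|M|$), and $q_{-1}(M)=0$. *)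

theory Defs
  imports Main
begin

definition poset :: "'a set \<Rightarrow> ('a \<Rightarrow> 'a \<Rightarrow> bool) \<Rightarrow> bool" where
  "poset P le \<longleftrightarrow> (\<forall>x\<in>P. le x x)
     \<and> (\<forall>x\<in>P. \<forall>y\<in>P. le x y \<and> le y x \<longrightarrow> x = y)
     \<and> (\<forall>x\<in>P. \<forall>y\<in>P. \<forall>z\<in>P. le x y \<and> le y z \<longrightarrow> le x z)"

definition filters :: "'a set \<Rightarrow> ('a \<Rightarrow> 'a \<Rightarrow> bool) \<Rightarrow> 'a set set" where
  "filters P le = {F. F \<subseteq> P \<and> (\<forall>x\<in>F. \<forall>y\<in>P. le x y \<longrightarrow> y \<in> F)}"

text \<open>The order of F(P): reverse inclusion.\<close>
definition rev_incl :: "'a set \<Rightarrow> 'a set \<Rightarrow> bool" where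
  "rev_incl F G \<longleftrightarrow> G \<subseteq> F"

definition interval :: "'b set \<Rightarrow> ('b \<Rightarrow> 'b \<Rightarrow> bool) \<Rightarrow> 'b \<Rightarrow> 'b \<Rightarrow> 'b set" where
  "interval M le a b = {x\<in>M. le a x \<and> le x b}"

definition is_chain :: "'b set \<Rightarrow> ('b \<Rightarrow> 'b \<Rightarrow> bool) \<Rightarrow> 'b set \<Rightarrow> bool" where
  "is_chain M le C \<longleftrightarrow> C \<subseteq> M \<and> (\<forall>x\<in>C. \<forall>y\<in>C. le x y \<or> le y x)"

definition maximal_chain :: "'b set \<Rightarrow> ('b \<Rightarrow> 'b \<Rightarrow> bool) \<Rightarrow> 'b set \<Rightarrow> bool" where
  "maximal_chain M le C \<longleftrightarrow> is_chain M le C \<and> (\<forall>D. is_chain M le D \<and> C \<subseteq> D \<longrightarrow> D = C)"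

definition cutting :: "'a set \<Rightarrow> ('a \<Rightarrow> 'a \<Rightarrow> bool) \<Rightarrow> 'a set \<Rightarrow> 'a set \<Rightarrow> bool" where
  "cutting P le a b \<longleftrightarrow> a \<in> filters P le \<and> b \<in> filters P le \<and> rev_incl a b
     \<and> (\<forall>C. maximal_chain (filters P le) rev_incl C
            \<longrightarrow> C \<inter> interval (filters P le) rev_incl a b \<noteq> {})"

definition S0 :: "'a set \<Rightarrow> ('a \<Rightarrow> 'a \<Rightarrow> bool) \<Rightarrow> 'a set \<Rightarrow> 'a set" where
  "S0 P le a = {s\<in>P - a. \<forall>t\<in>P - a. le s t \<longrightarrow> t = s}"

definition S1 :: "'a set \<Rightarrow> ('a \<Rightarrow> 'a \<Rightarrow> bool) \<Rightarrow> 'a set \<Rightarrow> 'a set" where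
  "S1 P le b = {s\<in>b. \<forall>t\<in>b. le t s \<longrightarrow> t = s}"

text \<open>The poset P_K: carrier Some ` P plus the new element None = x_K.\<close>
definition PK :: "'a set \<Rightarrow> 'a option set" where
  "PK P = insert None (Some ` P)"

fun PK_le :: "'a set \<Rightarrow> ('a \<Rightarrow> 'a \<Rightarrow> bool) \<Rightarrow> 'a set \<Rightarrow> 'a set \<Rightarrow> 'a option \<Rightarrow> 'a option \<Rightarrow> bool" where
  "PK_le P le a b (Some x) (Some y) = le x y"
| "PK_le P le a b None None = True"
| "PK_le P le a b (Some z) None = (z \<notin> a - b \<and> (\<exists>s\<in>S0 P le a. le z s))"
| "PK_le P le a b None (Some y) = (y \<notin> a - b \<and> (\<exists>s\<in>S1 P le b. le s y))"

text \<open>Convex expansion L \<boxplus> K = F(P_K), with its order (reverse inclusion).\<close>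
definition convex_expansion :: "'a set \<Rightarrow> ('a \<Rightarrow> 'a \<Rightarrow> bool) \<Rightarrow> 'a set \<Rightarrow> 'a set \<Rightarrow> 'a option set set" where
  "convex_expansion P le a b = filters (PK P) (PK_le P le a b)"

definition order_iso :: "'b set \<Rightarrow> ('b \<Rightarrow> 'b \<Rightarrow> bool) \<Rightarrow> 'c set \<Rightarrow> ('c \<Rightarrow> 'c \<Rightarrow> bool) \<Rightarrow> bool" where
  "order_iso A leA B leB \<longleftrightarrow> (\<exists>f. bij_betw f A B \<and> (\<forall>x\<in>A. \<forall>y\<in>A. leA x y \<longleftrightarrow> leB (f x) (f y)))"

text \<open>q_k(M): number of intervals of M isomorphic to the Boolean lattice B_k
  (intervals identified by their endpoints).\<close>
definition qk :: "nat \<Rightarrow> 'b set \<Rightarrow> ('b \<Rightarrow> 'b \<Rightarrow> bool) \<Rightarrow> nat" where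
  "qk k M le = card {(x, y). x \<in> M \<and> y \<in> M \<and> le x y
      \<and> order_iso (interval M le x y) le (Pow {..<k}) (\<subseteq>)}"

end

theory Submission
  imports Defs
begin

text \<open>
  An interval [F1, F2] of a lattice of filters (F2 \<subseteq> F1) is Boolean of rank k exactly when
  F1 - F2 is a k-element antichain. The filters of P_K are the sets Some ` F with F a filter of P
  inside the top a of the cutting, and the sets insert None (Some ` F) with F a filter containing
  its bottom b; by the cutting property every filter of P is of at least one kind, and those of
  both kinds form K. A Boolean interval of F(P_K) whose endpoints both avoid or both contain
  x_K = None comes from a Boolean pair of P inside a, respectively containing b. Every Boolean
  pair of P is of at least one kind, since an element outside a lies below every element of b,
  and those of both kinds are the Boolean intervals of K. If only the larger endpoint contains
  x_K, then x_K lies in the antichain and the remaining elements form a Boolean pair of rank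
  k - 1 in K. The cardinality identity is the case k = 0.
\<close>

section \<open>Posets and order isomorphisms\<close>

lemma poset_refl: "poset Q le \<Longrightarrow> x \<in> Q \<Longrightarrow> le x x"
  and poset_antisym: "poset Q le \<Longrightarrow> x \<in> Q \<Longrightarrow> y \<in> Q \<Longrightarrow> le x y \<Longrightarrow> le y x \<Longrightarrow> x = y"
  and poset_trans: "poset Q le \<Longrightarrow> x \<in> Q \<Longrightarrow> y \<in> Q \<Longrightarrow> z \<in> Q \<Longrightarrow> le x y \<Longrightarrow> le y z \<Longrightarrow> le x z"
  unfolding poset_def by blast+

lemma poset_subset: "poset Q le \<Longrightarrow> A \<subseteq> Q \<Longrightarrow> poset A le"
  unfolding poset_def by blast

lemma poset_dual: "poset Q le \<Longrightarrow> poset Q (\<lambda>x y. le y x)"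
  unfolding poset_def by blast

lemma poset_has_maximal_above:
  assumes "finite A" "poset A le" "z \<in> A"
  shows "\<exists>s\<in>A. le z s \<and> (\<forall>t\<in>A. le s t \<longrightarrow> t = s)"
  using assms(3)
proof (induction "card {t\<in>A. le z t}" arbitrary: z rule: less_induct)
  case less
  show ?case
  proof (cases "\<forall>t\<in>A. le z t \<longrightarrow> t = z")
    case True
    then show ?thesis using less.prems poset_refl[OF assms(2)] by blast
  next
    case False
    then obtain t where t: "t \<in> A" "le z t" "t \<noteq> z" by auto
    have "{u\<in>A. le t u} \<subseteq> {u\<in>A. le z u}"
      using poset_trans[OF assms(2)] less.prems t by blast
    moreover have "z \<notin> {u\<in>A. le t u}" "z \<in> {u\<in>A. le z u}"
      using poset_antisym[OF assms(2)] poset_refl[OF assms(2)] less.prems t by blast+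
    ultimately have "{u\<in>A. le t u} \<subset> {u\<in>A. le z u}"
      by blast
    then have "card {u\<in>A. le t u} < card {u\<in>A. le z u}"
      using assms(1) by (simp add: psubset_card_mono)
    then obtain s where "s \<in> A" "le t s" "\<forall>u\<in>A. le s u \<longrightarrow> u = s"
      using less.hyps t(1) by blast
    then show ?thesis using poset_trans[OF assms(2)] less.prems t by blast
  qed
qed

lemma ex_maximal_chain:
  assumes "finite M" "is_chain M le C0"
  shows "\<exists>C. maximal_chain M le C \<and> C0 \<subseteq> C"
proof -
  have "finite {C. is_chain M le C}"
    by (rule finite_subset[of _ "Pow M"]) (auto simp: is_chain_def assms(1))
  then obtain C where "C \<in> {C. is_chain M le C}" "C0 \<subseteq> C"
      "\<forall>D\<in>{C. is_chain M le C}. C \<subseteq> D \<longrightarrow> C = D"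
    using finite_has_maximal2[of _ C0] assms(2) by blast
  then show ?thesis
    unfolding maximal_chain_def by blast
qed

lemma order_iso_trans:
  assumes "order_iso A leA B leB" "order_iso B leB C leC"
  shows "order_iso A leA C leC"
proof -
  obtain f where f: "bij_betw f A B" "\<forall>x\<in>A. \<forall>y\<in>A. leA x y \<longleftrightarrow> leB (f x) (f y)"
    using assms(1) unfolding order_iso_def by blast
  obtain g where g: "bij_betw g B C" "\<forall>x\<in>B. \<forall>y\<in>B. leB x y \<longleftrightarrow> leC (g x) (g y)"
    using assms(2) unfolding order_iso_def by blast
  have "leA x y \<longleftrightarrow> leC ((g \<circ> f) x) ((g \<circ> f) y)" if "x \<in> A" "y \<in> A" for x y
    using f(2) g(2) that bij_betwE[OF f(1)] by simp
  then show ?thesis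
    unfolding order_iso_def using bij_betw_trans[OF f(1) g(1)] by blast
qed

lemma order_iso_card: "order_iso A leA B leB \<Longrightarrow> card A = card B"
  unfolding order_iso_def by (auto intro: bij_betw_same_card)

lemma order_iso_Pow:
  assumes "bij_betw g D E"
  shows "order_iso (Pow D) (\<subseteq>) (Pow E) (\<subseteq>)"
proof -
  have inj: "inj_on g D" using assms bij_betw_def by blast
  have "X \<subseteq> Y \<longleftrightarrow> g ` X \<subseteq> g ` Y" if "X \<subseteq> D" "Y \<subseteq> D" for X Y
    using inj_on_image_mem_iff[OF inj _ that(2)] that(1) by blast
  then show ?thesis
    unfolding order_iso_def using bij_betw_Pow[OF assms] by (intro exI[of _ "image g"]) auto
qed

text \<open>In a Boolean lattice every element has a complement; in an interval of sets closed
  under union and intersection, join and meet are union and intersection.\<close>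
lemma complement_in_boolean_interval:
  assumes iso: "order_iso I rev_incl (Pow S) (\<subseteq>)"
    and closed: "\<And>F G. F \<in> I \<Longrightarrow> G \<in> I \<Longrightarrow> F \<union> G \<in> I \<and> F \<inter> G \<in> I"
    and top: "F1 \<in> I" and bot: "F2 \<in> I" and between: "\<And>F. F \<in> I \<Longrightarrow> F2 \<subseteq> F \<and> F \<subseteq> F1"
    and F: "F \<in> I"
  shows "\<exists>G\<in>I. F \<union> G = F1 \<and> F \<inter> G = F2"
proof -
  obtain \<phi> where bij: "bij_betw \<phi> I (Pow S)"
    and iso_ord: "\<forall>F\<in>I. \<forall>G\<in>I. rev_incl F G \<longleftrightarrow> \<phi> F \<subseteq> \<phi> G"
    using iso unfolding order_iso_def by blast
  have ord: "G \<subseteq> F \<longleftrightarrow> \<phi> F \<subseteq> \<phi> G" if "F \<in> I" "G \<in> I" for F G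
    using iso_ord that unfolding rev_incl_def by blast
  have \<phi>S: "\<phi> X \<subseteq> S" if "X \<in> I" for X
    using bij_betwE[OF bij] that by blast
  have inj: "X = Y" if "X \<in> I" "Y \<in> I" "\<phi> X = \<phi> Y" for X Y
    using bij that unfolding bij_betw_def inj_on_def by blast
  have "S - \<phi> F \<in> \<phi> ` I"
    using bij unfolding bij_betw_def by blast
  then obtain G where G: "G \<in> I" "\<phi> G = S - \<phi> F"
    by blast
  have UI: "F \<union> G \<in> I" and II: "F \<inter> G \<in> I"
    using closed F G(1) by blast+
  have "\<phi> (F \<union> G) \<subseteq> \<phi> F" "\<phi> (F \<union> G) \<subseteq> \<phi> G" "\<phi> F1 \<subseteq> \<phi> (F \<union> G)"
    using ord[OF UI F] ord[OF UI G(1)] ord[OF top UI] between[OF UI] by blast+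
  then have "\<phi> F1 = \<phi> (F \<union> G)"
    using G(2) by blast
  moreover have "\<phi> F \<subseteq> \<phi> (F \<inter> G)" "\<phi> G \<subseteq> \<phi> (F \<inter> G)" "\<phi> (F \<inter> G) \<subseteq> \<phi> F2"
    using ord[OF F II] ord[OF G(1) II] ord[OF II bot] between[OF II] by blast+
  then have "\<phi> (F \<inter> G) = \<phi> F2"
    using \<phi>S[OF F] \<phi>S[OF bot] G(2) by blast
  ultimately show ?thesis
    using inj[OF top UI] inj[OF II bot] G(1) by blast
qed

section \<open>Boolean intervals in lattices of filters\<close>

definition antichain :: "('a \<Rightarrow> 'a \<Rightarrow> bool) \<Rightarrow> 'a set \<Rightarrow> bool" where
  "antichain le D \<longleftrightarrow> (\<forall>x\<in>D. \<forall>y\<in>D. le x y \<longrightarrow> x = y)"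

lemma mem_filters_iff: "F \<in> filters Q le \<longleftrightarrow> F \<subseteq> Q \<and> (\<forall>x\<in>F. \<forall>y\<in>Q. le x y \<longrightarrow> y \<in> F)"
  unfolding filters_def by simp

lemma filters_subset: "F \<in> filters Q le \<Longrightarrow> F \<subseteq> Q"
  unfolding filters_def by auto

lemma finite_filters: "finite Q \<Longrightarrow> finite (filters Q le)"
  by (rule finite_subset[of _ "Pow Q"]) (auto simp: filters_def)

lemma Un_filters: "F \<in> filters Q le \<Longrightarrow> G \<in> filters Q le \<Longrightarrow> F \<union> G \<in> filters Q le"
  and Int_filters: "F \<in> filters Q le \<Longrightarrow> G \<in> filters Q le \<Longrightarrow> F \<inter> G \<in> filters Q le"
  unfolding filters_def by auto

lemma interval_filters:
  "interval (filters Q le) rev_incl F1 F2 = {F \<in> filters Q le. F2 \<subseteq> F \<and> F \<subseteq> F1}"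
  unfolding interval_def rev_incl_def by auto

lemma interval_filters_top: "interval (filters Q le) rev_incl Q {} = filters Q le"
  unfolding interval_filters using filters_subset by blast

lemma interval_interval:
  assumes "x \<subseteq> A" "B \<subseteq> y"
  shows "interval (interval M rev_incl A B) rev_incl x y = interval M rev_incl x y"
  using assms unfolding interval_def rev_incl_def by blast

lemma filter_between_antichain:
  assumes F1: "F1 \<in> filters Q le" and F2: "F2 \<in> filters Q le" and ac: "antichain le (F1 - F2)"
    and F: "F2 \<subseteq> F" "F \<subseteq> F1"
  shows "F \<in> filters Q le"
  unfolding mem_filters_iff
proof (intro conjI ballI impI)
  show "F \<subseteq> Q" using F F1 filters_subset by blast
  fix x y assume x: "x \<in> F" and y: "y \<in> Q" and xy: "le x y"
  have "y \<in> F1" using F1 x F xy y unfolding mem_filters_iff by blast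
  moreover have "x \<in> F2 \<Longrightarrow> y \<in> F2" using F2 xy y unfolding mem_filters_iff by blast
  ultimately show "y \<in> F" using ac x F xy unfolding antichain_def by blast
qed

lemma order_iso_interval_filters_Pow:
  assumes fin: "finite Q" and F1: "F1 \<in> filters Q le" and F2: "F2 \<in> filters Q le"
    and sub: "F2 \<subseteq> F1" and ac: "antichain le (F1 - F2)"
  shows "order_iso (interval (filters Q le) rev_incl F1 F2) rev_incl (Pow {..<card (F1 - F2)}) (\<subseteq>)"
proof -
  let ?I = "interval (filters Q le) rev_incl F1 F2"
  have I: "?I = {F. F2 \<subseteq> F \<and> F \<subseteq> F1}"
    unfolding interval_filters using filter_between_antichain[OF F1 F2 ac] by auto
  have "bij_betw (\<lambda>F. F1 - F) ?I (Pow (F1 - F2))"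
    by (rule bij_betw_byWitness[where f'="\<lambda>X. F1 - X"]) (use sub in \<open>auto simp: I\<close>)
  moreover have "\<forall>F\<in>?I. \<forall>G\<in>?I. rev_incl F G \<longleftrightarrow> F1 - F \<subseteq> F1 - G"
    unfolding I rev_incl_def by auto
  ultimately have "order_iso ?I rev_incl (Pow (F1 - F2)) (\<subseteq>)"
    unfolding order_iso_def by (intro exI[of _ "\<lambda>F. F1 - F"]) simp
  moreover have "finite (F1 - F2)"
    using finite_subset[OF filters_subset[OF F1] fin] by simp
  then obtain g where "bij_betw g (F1 - F2) {..<card (F1 - F2)}"
    using finite_same_card_bij[of "F1 - F2" "{..<card (F1 - F2)}"] by auto
  then have "order_iso (Pow (F1 - F2)) (\<subseteq>) (Pow {..<card (F1 - F2)}) (\<subseteq>)"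
    by (rule order_iso_Pow)
  ultimately show ?thesis
    by (rule order_iso_trans)
qed

lemma antichain_of_boolean_interval_filters:
  assumes pos: "poset Q le" and F1: "F1 \<in> filters Q le" and F2: "F2 \<in> filters Q le"
    and sub: "F2 \<subseteq> F1"
    and iso: "order_iso (interval (filters Q le) rev_incl F1 F2) rev_incl (Pow S) (\<subseteq>)"
  shows "antichain le (F1 - F2)"
  unfolding antichain_def
proof (intro ballI impI)
  fix x y assume x: "x \<in> F1 - F2" and y: "y \<in> F1 - F2" and xy: "le x y"
  let ?I = "interval (filters Q le) rev_incl F1 F2"
  have Q: "x \<in> Q" "y \<in> Q"
    using x y filters_subset[OF F1] by blast+
  define F where "F = F2 \<union> {z\<in>F1. le y z}"
  have "F \<in> filters Q le"
    using F1 F2 poset_trans[OF pos Q(2)] unfolding F_def mem_filters_iff by blast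
  then have FI: "F \<in> ?I"
    using sub unfolding F_def interval_filters by blast
  have top: "F1 \<in> ?I" and bot: "F2 \<in> ?I" and between: "\<And>F. F \<in> ?I \<Longrightarrow> F2 \<subseteq> F \<and> F \<subseteq> F1"
    using F1 F2 sub unfolding interval_filters by blast+
  have closed: "\<And>F G. F \<in> ?I \<Longrightarrow> G \<in> ?I \<Longrightarrow> F \<union> G \<in> ?I \<and> F \<inter> G \<in> ?I"
    unfolding interval_filters using Un_filters Int_filters by blast
  obtain G where G: "G \<in> ?I" "F \<union> G = F1" "F \<inter> G = F2"
    using complement_in_boolean_interval[OF iso closed top bot between FI] by blast
  show "x = y"
  proof (rule ccontr)
    assume "x \<noteq> y"
    then have "x \<notin> F"
      using x poset_antisym[OF pos Q xy] unfolding F_def by blast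
    then have "x \<in> G"
      using x G(2) by blast
    then have "y \<in> G"
      using G(1) Q(2) xy unfolding interval_filters mem_filters_iff by blast
    moreover have "y \<in> F"
      using y poset_refl[OF pos Q(2)] unfolding F_def by blast
    ultimately show False
      using y G(3) by blast
  qed
qed

lemma boolean_interval_filters_iff:
  assumes fin: "finite Q" and pos: "poset Q le"
    and F1: "F1 \<in> filters Q le" and F2: "F2 \<in> filters Q le" and sub: "F2 \<subseteq> F1"
  shows "order_iso (interval (filters Q le) rev_incl F1 F2) rev_incl (Pow {..<k}) (\<subseteq>)
     \<longleftrightarrow> antichain le (F1 - F2) \<and> card (F1 - F2) = k"
proof
  let ?I = "interval (filters Q le) rev_incl F1 F2"
  assume iso: "order_iso ?I rev_incl (Pow {..<k}) (\<subseteq>)"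
  then have ac: "antichain le (F1 - F2)"
    by (rule antichain_of_boolean_interval_filters[OF pos F1 F2 sub])
  have "(2::nat) ^ k = card ?I"
    using order_iso_card[OF iso] by (simp add: card_Pow)
  also have "\<dots> = 2 ^ card (F1 - F2)"
    using order_iso_card[OF order_iso_interval_filters_Pow[OF fin F1 F2 sub ac]] by (simp add: card_Pow)
  finally show "antichain le (F1 - F2) \<and> card (F1 - F2) = k"
    using ac by simp
next
  assume "antichain le (F1 - F2) \<and> card (F1 - F2) = k"
  then show "order_iso (interval (filters Q le) rev_incl F1 F2) rev_incl (Pow {..<k}) (\<subseteq>)"
    using order_iso_interval_filters_Pow[OF fin F1 F2 sub] by blast
qed

definition boolean_pairs :: "'a set \<Rightarrow> ('a \<Rightarrow> 'a \<Rightarrow> bool) \<Rightarrow> nat \<Rightarrow> ('a set \<times> 'a set) set" where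
  "boolean_pairs Q le k = {(F1, F2). F1 \<in> filters Q le \<and> F2 \<in> filters Q le \<and> F2 \<subseteq> F1
      \<and> antichain le (F1 - F2) \<and> card (F1 - F2) = k}"

lemma finite_boolean_pairs: "finite Q \<Longrightarrow> finite (boolean_pairs Q le k)"
  by (rule finite_subset[of _ "filters Q le \<times> filters Q le"]) (auto simp: boolean_pairs_def finite_filters)

lemma qk_interval_filters:
  assumes fin: "finite Q" and pos: "poset Q le"
  shows "qk k (interval (filters Q le) rev_incl A B) rev_incl
    = card {p \<in> boolean_pairs Q le k. fst p \<subseteq> A \<and> B \<subseteq> snd p}"
proof -
  let ?K = "interval (filters Q le) rev_incl A B"
  have "x \<in> ?K \<and> y \<in> ?K \<and> rev_incl x y
      \<and> order_iso (interval ?K rev_incl x y) rev_incl (Pow {..<k}) (\<subseteq>)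
    \<longleftrightarrow> (x, y) \<in> boolean_pairs Q le k \<and> x \<subseteq> A \<and> B \<subseteq> y" for x y
  proof (cases "x \<in> filters Q le \<and> y \<in> filters Q le \<and> y \<subseteq> x \<and> x \<subseteq> A \<and> B \<subseteq> y")
    case True
    then have "interval ?K rev_incl x y = interval (filters Q le) rev_incl x y"
      by (intro interval_interval) auto
    then show ?thesis
      using True boolean_interval_filters_iff[OF fin pos, of x y k]
      by (auto simp: boolean_pairs_def interval_filters rev_incl_def)
  next
    case False
    then show ?thesis
      by (auto simp: boolean_pairs_def interval_filters rev_incl_def)
  qed
  then show ?thesis
    unfolding qk_def by (intro arg_cong[where f=card]) auto
qed

lemma qk_filters:
  assumes "finite Q" and "poset Q le"
  shows "qk k (filters Q le) rev_incl = card (boolean_pairs Q le k)"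
proof -
  have "{p \<in> boolean_pairs Q le k. fst p \<subseteq> Q \<and> {} \<subseteq> snd p} = boolean_pairs Q le k"
    by (auto simp: boolean_pairs_def mem_filters_iff)
  then show ?thesis
    using qk_interval_filters[OF assms, of k Q "{}"] by (simp add: interval_filters_top)
qed

lemma qk_0_rev_incl: "qk 0 M rev_incl = card M"
proof -
  have "x \<in> M \<and> y \<in> M \<and> rev_incl x y
      \<and> order_iso (interval M rev_incl x y) rev_incl (Pow {..<0::nat}) (\<subseteq>) \<longleftrightarrow> x \<in> M \<and> y = x" for x y
  proof
    assume h: "x \<in> M \<and> y \<in> M \<and> rev_incl x y
      \<and> order_iso (interval M rev_incl x y) rev_incl (Pow {..<0::nat}) (\<subseteq>)"
    then have "card (interval M rev_incl x y) = card (Pow {..<0::nat})"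
      using order_iso_card by blast
    moreover have "x \<in> interval M rev_incl x y" "y \<in> interval M rev_incl x y"
      using h by (auto simp: interval_def rev_incl_def)
    ultimately show "x \<in> M \<and> y = x"
      using h by (auto simp: card_1_singleton_iff)
  next
    assume h: "x \<in> M \<and> y = x"
    then have "interval M rev_incl x y = {x}"
      by (auto simp: interval_def rev_incl_def)
    then show "x \<in> M \<and> y \<in> M \<and> rev_incl x y
      \<and> order_iso (interval M rev_incl x y) rev_incl (Pow {..<0::nat}) (\<subseteq>)"
      using h by (auto simp: order_iso_def rev_incl_def bij_betw_def)
  qed
  then have "qk 0 M rev_incl = card ((\<lambda>x. (x, x)) ` M)"
    unfolding qk_def by (intro arg_cong[where f=card]) auto
  then show ?thesis
    by (simp add: card_image inj_on_def)
qed

section \<open>Sets over an adjoined point\<close>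

definition lift_set :: "bool \<Rightarrow> 'a set \<Rightarrow> 'a option set" where
  "lift_set c F = Some ` F \<union> (if c then {None} else {})"

lemma lift_set_eq_iff: "lift_set c F = lift_set d G \<longleftrightarrow> c = d \<and> F = G"
  unfolding lift_set_def by (auto simp: inj_image_eq_iff)

lemma lift_set_subset_iff: "lift_set c F \<subseteq> lift_set d G \<longleftrightarrow> (c \<longrightarrow> d) \<and> F \<subseteq> G"
  unfolding lift_set_def by auto

lemma lift_set_diff: "lift_set c F - lift_set d G = lift_set (c \<and> \<not> d) (F - G)"
  unfolding lift_set_def by auto

lemma card_lift_set: "finite F \<Longrightarrow> card (lift_set c F) = card F + of_bool c"
  unfolding lift_set_def by (simp add: card_image)

lemma lift_set_vimage: "lift_set (None \<in> G) (Some -` G) = G"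
  unfolding lift_set_def by (auto simp: image_iff) (metis option.exhaust)

lemma card_pairs_lift_set:
  assumes "finite X"
  shows "card X = (\<Sum>c\<in>UNIV. card {(F1, F2). (lift_set (fst c) F1, lift_set (snd c) F2) \<in> X})"
proof -
  let ?f = "\<lambda>(c, (F1, F2)). (lift_set (fst c) F1, lift_set (snd c) F2)"
  let ?S = "\<lambda>c. {(F1, F2). (lift_set (fst c) F1, lift_set (snd c) F2) \<in> X}"
  have inj: "inj ?f"
    by (auto intro!: injI simp: lift_set_eq_iff prod_eq_iff)
  have X: "?f ` (SIGMA c:UNIV. ?S c) = X"
  proof (intro set_eqI iffI)
    fix p assume "p \<in> X"
    then show "p \<in> ?f ` (SIGMA c:UNIV. ?S c)"
      using lift_set_vimage[of "fst p"] lift_set_vimage[of "snd p"]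
      by (intro image_eqI[of _ _ "((None \<in> fst p, None \<in> snd p), (Some -` fst p, Some -` snd p))"]) auto
  qed auto
  have "finite (?S c)" for c
  proof -
    have "inj (\<lambda>(F1, F2). (lift_set (fst c) F1, lift_set (snd c) F2))"
      by (auto intro!: injI simp: lift_set_eq_iff)
    then have "finite ((\<lambda>(F1, F2). (lift_set (fst c) F1, lift_set (snd c) F2)) -` X)"
      by (rule finite_vimageI[OF assms])
    moreover have "?S c = (\<lambda>(F1, F2). (lift_set (fst c) F1, lift_set (snd c) F2)) -` X"
      by auto
    ultimately show ?thesis
      by simp
  qed
  have "card X = card (?f ` (SIGMA c:UNIV. ?S c))"
    by (simp only: X)
  also have "\<dots> = card (SIGMA c:UNIV. ?S c)"
    by (rule card_image[OF inj_on_subset[OF inj subset_UNIV]])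
  also have "\<dots> = (\<Sum>c\<in>UNIV. card (?S c))"
    using \<open>\<And>c. finite (?S c)\<close> by simp
  finally show ?thesis .
qed

section \<open>Convex expansion along a cutting\<close>

locale finite_cutting =
  fixes P :: "'a set" and le :: "'a \<Rightarrow> 'a \<Rightarrow> bool" and a b :: "'a set"
  assumes finite_P: "finite P" and poset_P: "poset P le" and cutting: "cutting P le a b"
begin

lemma a_filter: "a \<in> filters P le" and b_filter: "b \<in> filters P le" and b_subset_a: "b \<subseteq> a"
  using cutting unfolding cutting_def rev_incl_def by auto

lemma finite_filter: "F \<in> filters P le \<Longrightarrow> finite F"
  using finite_subset[OF filters_subset finite_P] by blast

lemma filter_subset_or_supset:
  assumes F: "F \<in> filters P le"
  shows "F \<subseteq> a \<or> b \<subseteq> F"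
proof -
  have "is_chain (filters P le) rev_incl {F}"
    unfolding is_chain_def rev_incl_def using F by auto
  then obtain C where C: "maximal_chain (filters P le) rev_incl C" "F \<in> C"
    using ex_maximal_chain[OF finite_filters[OF finite_P]] by blast
  then obtain G where G: "G \<in> C" "G \<in> interval (filters P le) rev_incl a b"
    using cutting unfolding cutting_def by blast
  have "rev_incl F G \<or> rev_incl G F"
    using C G(1) unfolding maximal_chain_def is_chain_def by blast
  then show ?thesis
    using G(2) unfolding interval_filters rev_incl_def by blast
qed

lemma le_across_cutting:
  assumes x: "x \<in> P" "x \<notin> a" and y: "y \<in> b"
  shows "le x y"
proof -
  have "{z\<in>P. le x z} \<in> filters P le"
    unfolding mem_filters_iff using poset_trans[OF poset_P x(1)] by blast
  moreover have "\<not> {z\<in>P. le x z} \<subseteq> a"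
    using x poset_refl[OF poset_P] by blast
  ultimately show ?thesis
    using filter_subset_or_supset y by blast
qed

lemma PK_le_Some_None [simp]:
  assumes "z \<in> P"
  shows "PK_le P le a b (Some z) None \<longleftrightarrow> z \<notin> a"
proof
  assume "PK_le P le a b (Some z) None"
  then obtain s where "s \<in> P - a" "le z s"
    by (auto simp: S0_def)
  then show "z \<notin> a"
    using a_filter assms unfolding mem_filters_iff by blast
next
  assume "z \<notin> a"
  then obtain s where "s \<in> P - a" "le z s" "\<forall>t\<in>P - a. le s t \<longrightarrow> t = s"
    using poset_has_maximal_above[OF _ poset_subset[OF poset_P], of "P - a" z] finite_P assms
    by blast
  then show "PK_le P le a b (Some z) None"
    using \<open>z \<notin> a\<close> by (auto simp: S0_def)
qed

lemma PK_le_None_Some [simp]: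
  assumes "y \<in> P"
  shows "PK_le P le a b None (Some y) \<longleftrightarrow> y \<in> b"
proof
  assume "PK_le P le a b None (Some y)"
  then obtain s where "s \<in> b" "le s y"
    by (auto simp: S1_def)
  then show "y \<in> b"
    using b_filter assms unfolding mem_filters_iff by blast
next
  assume "y \<in> b"
  then obtain s where "s \<in> b" "le s y" "\<forall>t\<in>b. le t s \<longrightarrow> t = s"
    using poset_has_maximal_above[OF finite_filter[OF b_filter]
        poset_dual[OF poset_subset[OF poset_P filters_subset[OF b_filter]]]]
    by blast
  then show "PK_le P le a b None (Some y)"
    using \<open>y \<in> b\<close> b_subset_a by (auto simp: S1_def)
qed

declare PK_le.simps(3,4) [simp del]

lemma finite_PK: "finite (PK P)"
  using finite_P by (simp add: PK_def)

lemma poset_PK: "poset (PK P) (PK_le P le a b)"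
  unfolding poset_def
proof (intro conjI ballI impI)
  fix x assume "x \<in> PK P"
  then show "PK_le P le a b x x"
    by (cases x) (auto simp: PK_def poset_refl[OF poset_P])
next
  fix x y assume "x \<in> PK P" "y \<in> PK P" "PK_le P le a b x y \<and> PK_le P le a b y x"
  then show "x = y"
    using poset_antisym[OF poset_P] b_subset_a by (cases x; cases y) (auto simp: PK_def)
next
  fix x y z assume "x \<in> PK P" "y \<in> PK P" "z \<in> PK P"
    and "PK_le P le a b x y \<and> PK_le P le a b y z"
  moreover have a_up: "u \<in> a \<Longrightarrow> v \<in> P \<Longrightarrow> le u v \<Longrightarrow> v \<in> a"
    and b_up: "u \<in> b \<Longrightarrow> v \<in> P \<Longrightarrow> le u v \<Longrightarrow> v \<in> b" for u v
    using a_filter b_filter unfolding mem_filters_iff by blast+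
  ultimately show "PK_le P le a b x z"
    by (cases x; cases y; cases z; clarsimp simp: PK_def;
        meson a_up b_up le_across_cutting poset_trans[OF poset_P])
qed

lemma filter_of_lift_set_in_filters_PK:
  assumes "lift_set c F \<in> filters (PK P) (PK_le P le a b)"
  shows "F \<in> filters P le \<and> (if c then b \<subseteq> F else F \<subseteq> a)"
proof -
  have sub: "F \<subseteq> P"
    and up: "\<And>x y. x \<in> lift_set c F \<Longrightarrow> y \<in> PK P \<Longrightarrow> PK_le P le a b x y \<Longrightarrow> y \<in> lift_set c F"
    using assms unfolding mem_filters_iff lift_set_def PK_def by auto
  have "F \<in> filters P le"
    unfolding mem_filters_iff
  proof (intro conjI ballI impI sub)
    fix x y assume "x \<in> F" "y \<in> P" "le x y"
    then show "y \<in> F"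
      using up[of "Some x" "Some y"] by (auto simp: lift_set_def PK_def split: if_splits)
  qed
  moreover have "y \<in> F" if c "y \<in> b" for y
    using that up[of None "Some y"] filters_subset[OF b_filter] by (auto simp: lift_set_def PK_def)
  moreover have "x \<in> a" if "\<not> c" "x \<in> F" for x
  proof -
    have "x \<in> P"
      using sub that(2) by blast
    then show ?thesis
      using that up[of "Some x" None] by (auto simp: lift_set_def PK_def)
  qed
  ultimately show ?thesis
    by auto
qed

lemma lift_set_in_filters_PKI:
  assumes F: "F \<in> filters P le \<and> (if c then b \<subseteq> F else F \<subseteq> a)"
  shows "lift_set c F \<in> filters (PK P) (PK_le P le a b)"
proof -
  have FP: "F \<subseteq> P" and F_up: "\<And>u v. u \<in> F \<Longrightarrow> v \<in> P \<Longrightarrow> le u v \<Longrightarrow> v \<in> F"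
    using F unfolding mem_filters_iff by blast+
  have "y \<in> lift_set c F"
    if x: "x \<in> lift_set c F" and y: "y \<in> PK P" and xy: "PK_le P le a b x y" for x y
  proof (cases y)
    case None
    have c
    proof (cases x)
      case None
      then show c using x by (simp add: lift_set_def split: if_splits)
    next
      case (Some u)
      then have "u \<in> F" using x by (auto simp: lift_set_def split: if_splits)
      then have "u \<notin> a" using xy FP \<open>y = None\<close> Some by auto
      then show c using F \<open>u \<in> F\<close> by (auto split: if_splits)
    qed
    then show ?thesis using None by (simp add: lift_set_def)
  next
    case (Some v)
    then have "v \<in> P" using y by (auto simp: PK_def)
    show ?thesis
    proof (cases x)
      case None
      then have c "v \<in> b"
        using x xy Some \<open>v \<in> P\<close> by (auto simp: lift_set_def split: if_splits)
      then show ?thesis using F Some by (auto simp: lift_set_def)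
    next
      case (Some u)
      then have "u \<in> F" "le u v"
        using x xy \<open>y = Some v\<close> by (auto simp: lift_set_def split: if_splits)
      then show ?thesis
        using F_up \<open>v \<in> P\<close> \<open>y = Some v\<close> by (auto simp: lift_set_def)
    qed
  qed
  then show ?thesis
    using FP unfolding mem_filters_iff by (auto simp: lift_set_def PK_def)
qed

lemma lift_set_in_filters_PK:
  "lift_set c F \<in> filters (PK P) (PK_le P le a b)
     \<longleftrightarrow> F \<in> filters P le \<and> (if c then b \<subseteq> F else F \<subseteq> a)"
  using filter_of_lift_set_in_filters_PK lift_set_in_filters_PKI by blast

lemma antichain_lift_set:
  assumes "D \<subseteq> P"
  shows "antichain (PK_le P le a b) (lift_set c D)
     \<longleftrightarrow> antichain le D \<and> (c \<longrightarrow> D \<subseteq> a \<and> D \<inter> b = {})"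
proof -
  have "\<forall>x\<in>D. (PK_le P le a b (Some x) None \<longleftrightarrow> x \<notin> a) \<and> (PK_le P le a b None (Some x) \<longleftrightarrow> x \<in> b)"
    using assms by auto
  then show ?thesis
    unfolding antichain_def lift_set_def by auto
qed

lemma lift_set_pair_in_boolean_pairs_PK:
  "(lift_set c1 F1, lift_set c2 F2) \<in> boolean_pairs (PK P) (PK_le P le a b) k \<longleftrightarrow>
    (if c1 = c2 then (F1, F2) \<in> boolean_pairs P le k \<and> (if c1 then b \<subseteq> F2 else F1 \<subseteq> a)
     else c1 \<and> k \<noteq> 0 \<and> (F1, F2) \<in> boolean_pairs P le (k - 1) \<and> F1 \<subseteq> a \<and> b \<subseteq> F2)"
proof (cases "F1 \<in> filters P le")
  case True
  then have "F1 - F2 \<subseteq> P" "finite (F1 - F2)"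
    using filters_subset finite_filter by blast+
  then show ?thesis
    by (cases c1; cases c2)
      (auto simp: boolean_pairs_def lift_set_in_filters_PK lift_set_subset_iff lift_set_diff
        antichain_lift_set card_lift_set)
next
  case False
  then show ?thesis
    by (auto simp: boolean_pairs_def lift_set_in_filters_PK)
qed

lemma card_boolean_pairs_PK:
  "card (boolean_pairs (PK P) (PK_le P le a b) k)
     = card {p \<in> boolean_pairs P le k. fst p \<subseteq> a} + card {p \<in> boolean_pairs P le k. b \<subseteq> snd p}
       + (if k = 0 then 0 else card {p \<in> boolean_pairs P le (k - 1). fst p \<subseteq> a \<and> b \<subseteq> snd p})"
proof -
  have "finite (boolean_pairs (PK P) (PK_le P le a b) k)"
    using finite_PK by (rule finite_boolean_pairs)
  then show ?thesis
    by (subst card_pairs_lift_set)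
      (simp_all add: UNIV_bool lift_set_pair_in_boolean_pairs_PK case_prod_unfold flip: UNIV_Times_UNIV)
qed

lemma boolean_pair_below_or_above:
  assumes "(F1, F2) \<in> boolean_pairs P le k"
  shows "F1 \<subseteq> a \<or> b \<subseteq> F2"
proof (rule ccontr)
  assume "\<not> (F1 \<subseteq> a \<or> b \<subseteq> F2)"
  then obtain x y where x: "x \<in> F1" "x \<notin> a" and y: "y \<in> b" "y \<notin> F2"
    by blast
  have F: "F1 \<in> filters P le" "F2 \<in> filters P le" "antichain le (F1 - F2)"
    using assms unfolding boolean_pairs_def by auto
  have "b \<subseteq> F1" "F2 \<subseteq> a"
    using filter_subset_or_supset[OF F(1)] filter_subset_or_supset[OF F(2)] x y by blast+
  moreover have "le x y"
    using le_across_cutting x y filters_subset[OF F(1)] by blast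
  ultimately have "x = y"
    using F(3) x y unfolding antichain_def by blast
  then show False
    using x y b_subset_a by blast
qed

lemma qk_convex_expansion:
  "qk k (convex_expansion P le a b) rev_incl
     = qk k (filters P le) rev_incl + qk k (interval (filters P le) rev_incl a b) rev_incl
       + (if k = 0 then 0 else qk (k - 1) (interval (filters P le) rev_incl a b) rev_incl)"
proof -
  let ?below = "{p \<in> boolean_pairs P le k. fst p \<subseteq> a}"
  let ?above = "{p \<in> boolean_pairs P le k. b \<subseteq> snd p}"
  have "?below \<union> ?above = boolean_pairs P le k"
    using boolean_pair_below_or_above by fastforce
  moreover have "?below \<inter> ?above = {p \<in> boolean_pairs P le k. fst p \<subseteq> a \<and> b \<subseteq> snd p}"
    by blast
  ultimately have "card ?below + card ?above
      = card (boolean_pairs P le k) + card {p \<in> boolean_pairs P le k. fst p \<subseteq> a \<and> b \<subseteq> snd p}"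
    using card_Un_Int[of ?below ?above] finite_boolean_pairs[OF finite_P] by simp
  then show ?thesis
    using card_boolean_pairs_PK[of k]
    by (simp add: convex_expansion_def qk_filters qk_interval_filters finite_P poset_P
        finite_PK poset_PK)
qed

end

theorem theorem4:
  fixes P :: "'a set" and le :: "'a \<Rightarrow> 'a \<Rightarrow> bool" and a b :: "'a set" and k :: nat
  assumes "finite P" and "poset P le" and "cutting P le a b"
  shows "qk k (convex_expansion P le a b) rev_incl
           = qk k (filters P le) rev_incl
             + qk k (interval (filters P le) rev_incl a b) rev_incl
             + (if k = 0 then 0 else qk (k - 1) (interval (filters P le) rev_incl a b) rev_incl)
         \<and> card (convex_expansion P le a b)
           = card (filters P le) + card (interval (filters P le) rev_incl a b)"
proof -
  interpret finite_cutting P le a b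
    using assms by unfold_locales
  have "card (convex_expansion P le a b) = card (filters P le) + card (interval (filters P le) rev_incl a b)"
    using qk_convex_expansion[of 0] by (simp add: qk_0_rev_incl)
  then show ?thesis
    using qk_convex_expansion[of k] by blast
qed

end
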